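(* Let $\Phi\colon\mathcal{X}\to\mathcal{X}$ be an involution, $\Pi$ a closed convex family of conditional distributions $\pi\colon\mathcal{X}\to\Delta(\mathcal{Y})$, $\pi^*\in\mathcal{C}_{\mathrm{coh}}\cap\Pi$, and let $F(p)=\sum_kp_k\log p_k$ be the negative entropy on $\mathbb{R}^d_+$, so $\mathsf{B}_F=\mathsf{D}_{\mathrm{KL}}$ is the unnormalized relative entropy. Let $\overline\pi\in\arg\min_{\pi\in\mathcal{C}^\dagger_{\mathrm{coh}}}\mathsf{B}(\pi\parallel\pi_0)$ and $\widehat{\widehat\pi}\in\arg\min_{\pi\in\mathcal{C}_{\mathrm{coh}}\cap\Pi}\mathsf{B}(\pi\parallel\overline\pi)$. Then $$\mathbb{E}[\mathsf{D}_{\mathrm{KL}}(\pi^*(x)\parallel\pi_0(x))]-\mathbb{E}[\mathsf{D}_{\mathrm{KL}}(\pi^*(x)\parallel\widehat{\widehat\pi}(x))]\ge\mathbb{E}_{x\sim\mathcal{D}_{\mathcal{X}}}\Big[2\min\{\lambda(x),1-\lambda(x)\}\,\mathsf{D}^2_{\mathrm{Hell}}(\pi_0(x)\parallel\pi_0(\Phi(x)))\Big],$$ where $\lambda(x)=\frac{\mathbb{P}[x]}{\mathbb{P}[x]+\mathbb{P}[\Phi(x)]}$.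
   Context: $\mathcal{X},\mathcal{Y}$ finite, $d=|\mathcal{Y}|$; $\Pi_{\mathrm{all}}=\Delta(\mathcal{Y})^{\mathcal{X}}$; $\pi_0\in\Pi_{\mathrm{all}}$ baseline; $\mathcal{D}_{\mathcal{X}}$ full-support distribution on $\mathcal{X}$, $\mathbb{P}[x]=\mathcal{D}_{\mathcal{X}}(x)$, $\mathbb{E}=\mathbb{E}_{x\sim\mathcal{D}_{\mathcal{X}}}$. $\mathsf{B}(\pi\parallel\pi')=\mathbb{E}[\mathsf{B}_F(\pi(x)\parallel\pi'(x))]$. $\mathcal{C}^\dagger_{\mathrm{coh}}=\{\pi\in(\mathbb{R}^d_+)^{\mathcal{X}}:\pi(x)=\pi(\Phi(x))\ \forall x\}$, $\mathcal{C}_{\mathrm{coh}}=\mathcal{C}^\dagger_{\mathrm{coh}}\cap\Pi_{\mathrm{all}}$. Squared Hellinger distance: $\mathsf{D}^2_{\mathrm{Hell}}(p\parallel q)=1-\sum_k\sqrt{p_kq_k}$. *)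

theory Defs
  imports "HOL-Analysis.Analysis"
begin

text \<open>Conditional distributions / policies are elements of real^'y^'x (row pi $ x is a
  vector indexed by the finite label type 'y). Finite X and Y are the finite types 'x, 'y.\<close>

definition prob_vec :: "real^'y::finite \<Rightarrow> bool" where
  "prob_vec p \<longleftrightarrow> (\<forall>k. 0 \<le> p $ k) \<and> (\<Sum>k\<in>UNIV. p $ k) = 1"

definition Pi_all :: "(real^'y::finite^'x::finite) set" where
  "Pi_all = {\<pi>. \<forall>x. prob_vec (\<pi> $ x)}"

definition C_coh_dag :: "('x::finite \<Rightarrow> 'x) \<Rightarrow> (real^'y::finite^'x) set" where
  "C_coh_dag \<Phi> = {\<pi>. (\<forall>x k. 0 \<le> \<pi> $ x $ k) \<and> (\<forall>x. \<pi> $ x = \<pi> $ (\<Phi> x))}"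

definition C_coh :: "('x::finite \<Rightarrow> 'x) \<Rightarrow> (real^'y::finite^'x) set" where
  "C_coh \<Phi> = C_coh_dag \<Phi> \<inter> Pi_all"

text \<open>Bregman divergence of the negative entropy F(p) = sum_k p_k log p_k on R^d_+,
  i.e. the unnormalized relative entropy, coordinatewise
  p log(p/q) - p + q, with conventions 0 log(0/q) = 0 and p log(p/0) = +infinity for p > 0.\<close>
definition kl_term :: "real \<Rightarrow> real \<Rightarrow> ereal" where
  "kl_term p q = (if p = 0 then ereal q
                  else if q = 0 then \<infinity>
                  else ereal (p * ln (p / q) - p + q))"

definition KL :: "real^'y::finite \<Rightarrow> real^'y \<Rightarrow> ereal" where
  "KL p q = (\<Sum>k\<in>UNIV. kl_term (p $ k) (q $ k))"

definition Bpol :: "('x::finite \<Rightarrow> real) \<Rightarrow> real^'y::finite^'x \<Rightarrow> real^'y^'x \<Rightarrow> ereal" where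
  "Bpol D \<pi> \<pi>' = (\<Sum>x\<in>UNIV. ereal (D x) * KL (\<pi> $ x) (\<pi>' $ x))"

definition hell2 :: "real^'y::finite \<Rightarrow> real^'y \<Rightarrow> real" where
  "hell2 p q = 1 - (\<Sum>k\<in>UNIV. sqrt (p $ k * q $ k))"

end

theory Submission
  imports Defs
begin

(* Pairing the two conditions with weights
   \<lambda>(x) and 1 - \<lambda>(x), the identity
     \<lambda> KL(p, a) + (1 - \<lambda>) KL(p, b) = KL(p, a^\<lambda> b^(1-\<lambda>)) + (1 - \<Sum>k. a_k^\<lambda> b_k^(1-\<lambda>))
   shows B(\<pi>, \<pi>0) = B(\<pi>, G) + c on coherent policies, where G is the unnormalized geometric mixture
   of \<pi>0(x) and \<pi>0(\<Phi> x).  Hence the coherent projection \<pi>bar is G itself.  As \<pi>hat is the Bregman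
   projection of G onto the convex set C_coh \<inter> \<Pi>, the Pythagorean inequality gives
   B(\<pi>*, \<pi>hat) \<le> B(\<pi>*, G) = B(\<pi>*, \<pi>0) - c, and weighted AM-GM bounds c below by the Hellinger term. *)

section \<open>Unnormalized relative entropy\<close>

lemma ln_less_minus_one:
  fixes x :: real
  assumes "0 < x" "x \<noteq> 1"
  shows "ln x < x - 1"
proof -
  have "ln x = 2 * ln (sqrt x)"
    using assms by (simp add: ln_sqrt)
  also have "\<dots> \<le> 2 * (sqrt x - 1)"
    using ln_le_minus_one[of "sqrt x"] assms by simp
  also have "\<dots> < x - 1"
  proof -
    have "(sqrt x - 1)^2 > 0"
      using assms by simp
    then show ?thesis
      using assms by (simp add: power2_eq_square algebra_simps)
  qed
  finally show ?thesis .
qed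

(* Agrees with kl_term when p = 0 or q > 0; for p > 0 = q its value is junk. *)
definition kl_real :: "real \<Rightarrow> real \<Rightarrow> real" where
  "kl_real p q = (if p = 0 then q else p * ln (p / q) - p + q)"

lemma kl_term_eq_kl_real: "p = 0 \<or> 0 < q \<Longrightarrow> kl_term p q = ereal (kl_real p q)"
  by (auto simp: kl_term_def kl_real_def)

lemma kl_real_pos:
  assumes "0 \<le> p" "0 < q" "p \<noteq> q"
  shows "0 < kl_real p q"
proof (cases "p = 0")
  case True
  then show ?thesis using assms by (simp add: kl_real_def)
next
  case False
  then have "0 < p" using assms by simp
  have "ln (q / p) < q / p - 1"
    using assms \<open>0 < p\<close> by (intro ln_less_minus_one) auto
  then have "p * ln (q / p) < p * (q / p - 1)"
    using \<open>0 < p\<close> by simp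
  moreover have "ln (p / q) = - ln (q / p)"
    using \<open>0 < p\<close> assms by (simp add: ln_div)
  ultimately show ?thesis
    using \<open>0 < p\<close> False by (simp add: kl_real_def right_diff_distrib)
qed

lemma kl_real_nonneg: "0 \<le> p \<Longrightarrow> 0 < q \<Longrightarrow> 0 \<le> kl_real p q"
  using kl_real_pos[of p q] by (cases "p = q") (auto simp: kl_real_def)

lemma kl_real_three_point:
  assumes "0 \<le> p" "0 < u" "0 < g"
  shows "kl_real p g = kl_real p u + kl_real u g + (p - u) * ln (u / g)"
proof (cases "p = 0")
  case False
  have "ln (p / g) = ln (p / u) + ln (u / g)"
    using assms False by (simp add: ln_div)
  then show ?thesis
    using False assms by (simp add: kl_real_def algebra_simps)
qed (use assms in \<open>simp add: kl_real_def\<close>)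

lemma kl_term_nonneg: "0 \<le> p \<Longrightarrow> 0 \<le> q \<Longrightarrow> 0 \<le> kl_term p q"
  using kl_real_nonneg[of p q] by (auto simp: kl_term_def kl_real_def)

lemma kl_term_self: "0 \<le> p \<Longrightarrow> kl_term p p = 0"
  by (simp add: kl_term_def)

lemma kl_term_eq_0_imp_eq:
  assumes "0 \<le> p" "0 \<le> q" "kl_term p q = 0"
  shows "p = q"
proof (cases "q = 0")
  case False
  then show ?thesis
    using assms kl_real_pos[of p q] kl_term_eq_kl_real[of p q] by fastforce
qed (use assms in \<open>auto simp: kl_term_def split: if_splits\<close>)

lemma kl_real_segment_le:
  assumes "0 \<le> h" "0 \<le> p" "0 < t" "t < 1" "0 < h \<or> 0 < p \<Longrightarrow> 0 < g"
  shows "kl_real ((1 - t) * h + t * p) g - kl_real h g \<le> t * ((p - h) * ln (((1 - t) * h + t * p) / g))"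
proof (cases "0 < h \<or> 0 < p")
  case True
  define u where "u = (1 - t) * h + t * p"
  have "0 < u"
    using True assms by (auto simp: u_def add_pos_nonneg add_nonneg_pos)
  have "kl_real h g = kl_real h u + kl_real u g + (h - u) * ln (u / g)"
    using \<open>0 < u\<close> True assms by (intro kl_real_three_point) auto
  moreover have "0 \<le> kl_real h u"
    using \<open>0 < u\<close> assms by (intro kl_real_nonneg)
  moreover have "t * ((p - h) * ln (u / g)) = - ((h - u) * ln (u / g))"
    by (simp add: u_def algebra_simps)
  ultimately show ?thesis
    unfolding u_def[symmetric] by linarith
next
  case False
  then show ?thesis
    using assms by simp
qed

section \<open>Geometric mixtures and the Hellinger distance\<close>

lemma kl_term_geometric_mean:
  assumes "0 \<le> q" "0 \<le> a" "0 \<le> b" "0 < l" "l < 1"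
  shows "ereal l * kl_term q a + ereal (1 - l) * kl_term q b
    = kl_term q (a powr l * b powr (1 - l)) + ereal (l * a + (1 - l) * b - a powr l * b powr (1 - l))"
proof -
  consider "q = 0" | "0 < q" "a = 0 \<or> b = 0" | "0 < q" "0 < a" "0 < b"
    using assms by fastforce
  then show ?thesis
  proof cases
    case 1
    then show ?thesis by (simp add: kl_term_def algebra_simps)
  next
    case 2
    then have "kl_term q a = \<infinity> \<or> kl_term q b = \<infinity>"
      by (auto simp: kl_term_def)
    then show ?thesis
      using 2 assms kl_term_nonneg[of q a] kl_term_nonneg[of q b] by (auto simp: kl_term_def)
  next
    case 3
    define g where "g = a powr l * b powr (1 - l)"
    have "0 < g" using 3 by (simp add: g_def)
    have "ln g = l * ln a + (1 - l) * ln b"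
      using 3 by (simp add: g_def ln_mult ln_powr)
    moreover have "ln (q / a) = ln q - ln a" "ln (q / b) = ln q - ln b" "ln (q / g) = ln q - ln g"
      using 3 \<open>0 < g\<close> by (simp_all add: ln_div)
    ultimately have "l * (q * ln (q / a) - q + a) + (1 - l) * (q * ln (q / b) - q + b)
        = (q * ln (q / g) - q + g) + (l * a + (1 - l) * b - g)"
      by (simp only:) (simp add: algebra_simps)
    then show ?thesis
      using 3 \<open>0 < g\<close> by (simp add: kl_term_def g_def)
  qed
qed

definition geo_mix :: "real \<Rightarrow> real^'y::finite \<Rightarrow> real^'y \<Rightarrow> real^'y" where
  "geo_mix l a b = (\<chi> k. a $ k powr l * b $ k powr (1 - l))"

lemma geo_mix_nonneg: "0 \<le> geo_mix l a b $ k"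
  by (simp add: geo_mix_def)

lemma geo_mix_swap: "geo_mix (1 - l) b a = geo_mix l a b"
  by (simp add: geo_mix_def vec_eq_iff mult.commute)

lemma KL_nonneg: "(\<And>k. 0 \<le> p $ k) \<Longrightarrow> (\<And>k. 0 \<le> q $ k) \<Longrightarrow> 0 \<le> KL p q"
  unfolding KL_def by (intro sum_nonneg kl_term_nonneg)

lemma KL_geometric_mean:
  assumes p: "\<And>k. 0 \<le> p $ k" and a: "prob_vec a" and b: "prob_vec b" and l: "0 < l" "l < 1"
  shows "ereal l * KL p a + ereal (1 - l) * KL p b
    = KL p (geo_mix l a b) + ereal (1 - (\<Sum>k\<in>UNIV. geo_mix l a b $ k))"
proof -
  have a0: "\<And>k. 0 \<le> a $ k" and b0: "\<And>k. 0 \<le> b $ k"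
    using a b by (auto simp: prob_vec_def)
  have "ereal l * KL p a + ereal (1 - l) * KL p b
      = (\<Sum>k\<in>UNIV. ereal l * kl_term (p $ k) (a $ k) + ereal (1 - l) * kl_term (p $ k) (b $ k))"
    unfolding KL_def sum.distrib
    by (subst (1 2) sum_ereal_right_distrib) (auto intro: kl_term_nonneg p a0 b0)
  also have "\<dots> = (\<Sum>k\<in>UNIV. kl_term (p $ k) (geo_mix l a b $ k)
      + ereal (l * a $ k + (1 - l) * b $ k - geo_mix l a b $ k))"
    unfolding geo_mix_def using p a0 b0 l by (simp add: kl_term_geometric_mean)
  also have "\<dots> = KL p (geo_mix l a b)
      + ereal (l * (\<Sum>k\<in>UNIV. a $ k) + (1 - l) * (\<Sum>k\<in>UNIV. b $ k) - (\<Sum>k\<in>UNIV. geo_mix l a b $ k))"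
    by (simp add: KL_def sum.distrib sum_subtractf sum_distrib_left)
  finally show ?thesis
    using a b by (simp add: prob_vec_def)
qed

lemma hellinger_weighted_am_gm:
  fixes a b l :: real
  assumes "0 \<le> a" "0 \<le> b" "0 < l" "l \<le> 1/2"
  shows "l * (a + b - 2 * sqrt (a * b)) \<le> l * a + (1 - l) * b - a powr l * b powr (1 - l)"
proof (cases "a = 0 \<or> b = 0")
  case True
  then show ?thesis
    using assms mult_right_mono[of l "1 - l" b] by auto
next
  case False
  then have "0 < a" "0 < b" using assms by auto
  have "sqrt (a * b) powr (2 * l) * b powr (1 - 2 * l) \<le> 2 * l * sqrt (a * b) + (1 - 2 * l) * b"
    using \<open>0 < a\<close> \<open>0 < b\<close> assms by (intro Youngs_inequality_0) auto
  moreover have "sqrt (a * b) powr (2 * l) * b powr (1 - 2 * l) = a powr l * b powr (1 - l)"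
    using \<open>0 < a\<close> \<open>0 < b\<close>
    by (simp add: powr_half_sqrt[symmetric] powr_powr powr_mult powr_add[symmetric])
  ultimately show ?thesis
    by (simp add: algebra_simps)
qed

lemma hell2_le_geo_mix_gap:
  assumes a: "prob_vec a" and b: "prob_vec b" and l: "0 < l" "l < 1"
  shows "2 * min l (1 - l) * hell2 a b \<le> 1 - (\<Sum>k\<in>UNIV. geo_mix l a b $ k)"
proof -
  have a0: "\<And>k. 0 \<le> a $ k" and b0: "\<And>k. 0 \<le> b $ k"
    using a b by (auto simp: prob_vec_def)
  have pointwise: "min l (1 - l) * (a $ k + b $ k - 2 * sqrt (a $ k * b $ k))
      \<le> l * a $ k + (1 - l) * b $ k - geo_mix l a b $ k" for k
  proof (cases "l \<le> 1/2")
    case True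
    then show ?thesis
      using hellinger_weighted_am_gm[of "a $ k" "b $ k" l] a0 b0 l by (simp add: geo_mix_def)
  next
    case False
    then show ?thesis
      using hellinger_weighted_am_gm[of "b $ k" "a $ k" "1 - l"] a0 b0 l
      by (simp add: geo_mix_def algebra_simps mult.commute)
  qed
  have "(\<Sum>k\<in>UNIV. min l (1 - l) * (a $ k + b $ k - 2 * sqrt (a $ k * b $ k)))
      = min l (1 - l) * ((\<Sum>k\<in>UNIV. a $ k) + (\<Sum>k\<in>UNIV. b $ k) - 2 * (\<Sum>k\<in>UNIV. sqrt (a $ k * b $ k)))"
    by (simp add: sum_subtractf sum.distrib flip: sum_distrib_left)
  then have "2 * min l (1 - l) * hell2 a b
      = (\<Sum>k\<in>UNIV. min l (1 - l) * (a $ k + b $ k - 2 * sqrt (a $ k * b $ k)))"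
    using a b by (simp add: hell2_def prob_vec_def algebra_simps)
  also have "\<dots> \<le> (\<Sum>k\<in>UNIV. l * a $ k + (1 - l) * b $ k - geo_mix l a b $ k)"
    by (intro sum_mono pointwise)
  also have "\<dots> = 1 - (\<Sum>k\<in>UNIV. geo_mix l a b $ k)"
    using a b by (simp add: prob_vec_def sum.distrib sum_subtractf sum_distrib_left[symmetric])
  finally show ?thesis .
qed

section \<open>Pythagorean inequality for Bregman projections\<close>

lemma Bpol_nonneg:
  assumes "\<And>x. 0 \<le> D x" "\<And>x k. 0 \<le> \<pi> $ x $ k" "\<And>x k. 0 \<le> \<rho> $ x $ k"
  shows "0 \<le> Bpol D \<pi> \<rho>"
  unfolding Bpol_def using assms by (intro sum_nonneg ereal_0_le_mult KL_nonneg) auto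

lemma Bpol_self: "(\<And>x k. 0 \<le> \<pi> $ x $ k) \<Longrightarrow> Bpol D \<pi> \<pi> = 0"
  by (simp add: Bpol_def KL_def kl_term_self)

lemma Bpol_eq_ereal_kl_real:
  assumes "\<And>x k. 0 \<le> \<pi> $ x $ k" "\<And>x k. 0 < \<pi> $ x $ k \<Longrightarrow> 0 < \<rho> $ x $ k"
  shows "Bpol D \<pi> \<rho> = ereal (\<Sum>x\<in>UNIV. D x * (\<Sum>k\<in>UNIV. kl_real (\<pi> $ x $ k) (\<rho> $ x $ k)))"
proof -
  have "kl_term (\<pi> $ x $ k) (\<rho> $ x $ k) = ereal (kl_real (\<pi> $ x $ k) (\<rho> $ x $ k))" for x k
    using assms[of x k] by (cases "0 < \<pi> $ x $ k") (auto intro: kl_term_eq_kl_real)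
  then show ?thesis
    by (simp add: Bpol_def KL_def)
qed

lemma Bpol_finite_imp_support:
  assumes D: "\<And>x. 0 < D x" and "\<And>x k. 0 \<le> \<pi> $ x $ k" "\<And>x k. 0 \<le> \<rho> $ x $ k"
    and "Bpol D \<pi> \<rho> \<noteq> \<infinity>" "0 < \<pi> $ x $ k"
  shows "0 < \<rho> $ x $ k"
proof (rule ccontr)
  assume "\<not> 0 < \<rho> $ x $ k"
  then have "\<rho> $ x $ k = 0"
    using assms(3)[of x k] by linarith
  then have "kl_term (\<pi> $ x $ k) (\<rho> $ x $ k) = \<infinity>"
    using assms(5) by (simp add: kl_term_def)
  then have "KL (\<pi> $ x) (\<rho> $ x) = \<infinity>"
    unfolding KL_def by (subst sum_Pinfty) auto
  then have "Bpol D \<pi> \<rho> = \<infinity>"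
    unfolding Bpol_def using D[of x] by (subst sum_Pinfty) auto
  then show False
    using assms by simp
qed

lemma Bpol_eq_0_imp_eq:
  assumes D: "\<And>x. 0 < D x" and \<pi>: "\<And>x k. 0 \<le> \<pi> $ x $ k" and \<rho>: "\<And>x k. 0 \<le> \<rho> $ x $ k"
    and "Bpol D \<pi> \<rho> = 0"
  shows "\<pi> = \<rho>"
proof -
  have "0 \<le> ereal (D x) * KL (\<pi> $ x) (\<rho> $ x)" for x
    using less_imp_le[OF D] \<pi> \<rho> by (simp add: KL_nonneg)
  then have DKL: "ereal (D x) * KL (\<pi> $ x) (\<rho> $ x) = 0" for x
    using assms(4) unfolding Bpol_def by (simp add: sum_nonneg_eq_0_iff)
  have "KL (\<pi> $ x) (\<rho> $ x) = 0" for x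
    using DKL[of x] D[of x] by simp
  then have "kl_term (\<pi> $ x $ k) (\<rho> $ x $ k) = 0" for x k
    using \<pi> \<rho> unfolding KL_def by (simp add: sum_nonneg_eq_0_iff kl_term_nonneg)
  then show ?thesis
    using \<pi> \<rho> kl_term_eq_0_imp_eq by (simp add: vec_eq_iff)
qed

lemma log_perturbation_nonneg:
  fixes A :: "real \<Rightarrow> real"
  assumes A: "(A \<longlongrightarrow> a) (at_right 0)" and "0 \<le> M"
    and nonneg: "\<forall>\<^sub>F t in at_right 0. 0 \<le> A t + M * ln t"
  shows "M = 0" "0 \<le> a"
proof -
  show "M = 0"
  proof (rule ccontr)
    assume "M \<noteq> 0"
    then have "LIM t at_right 0. M * ln t :> at_bot"
      using \<open>0 \<le> M\<close> by (intro filterlim_tendsto_pos_mult_at_bot[OF tendsto_const _ ln_at_0]) auto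
    then have "LIM t at_right 0. A t + M * ln t :> at_bot"
      by (simp add: filterlim_tendsto_add_at_bot_iff[OF A])
    then have "\<forall>\<^sub>F t in at_right 0. A t + M * ln t < 0"
      by (simp add: filterlim_at_bot_dense)
    then have "\<forall>\<^sub>F t in at_right (0::real). False"
      using nonneg by eventually_elim auto
    then show False
      by simp
  qed
  then show "0 \<le> a"
    using nonneg by (intro tendsto_lowerbound[OF A]) auto
qed

lemma Bpol_segment_first_order:
  fixes p h q :: "real^'y::finite^'x::finite"
  assumes D: "\<And>x. 0 < D x"
    and p: "\<And>x k. 0 \<le> p $ x $ k" and h: "\<And>x k. 0 \<le> h $ x $ k"
    and pq: "\<And>x k. 0 < p $ x $ k \<Longrightarrow> 0 < q $ x $ k"
    and hq: "\<And>x k. 0 < h $ x $ k \<Longrightarrow> 0 < q $ x $ k"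
    and t: "0 < t" "t < 1"
    and min: "Bpol D h q \<le> Bpol D ((1 - t) *\<^sub>R h + t *\<^sub>R p) q"
  shows "0 \<le> (\<Sum>x\<in>UNIV. D x * (\<Sum>k\<in>UNIV.
            (p $ x $ k - h $ x $ k) * ln (((1 - t) * h $ x $ k + t * p $ x $ k) / q $ x $ k)))"
    (is "0 \<le> ?S")
proof -
  define u where "u = (1 - t) *\<^sub>R h + t *\<^sub>R p"
  have u: "u $ x $ k = (1 - t) * h $ x $ k + t * p $ x $ k" for x k
    by (simp add: u_def)
  have u_nonneg: "0 \<le> u $ x $ k" for x k
    using p h t by (simp add: u)
  have uq: "0 < q $ x $ k" if "0 < u $ x $ k" for x k
    using that p[of x k] h[of x k] pq hq t by (force simp: u)
  have "(\<Sum>x\<in>UNIV. D x * (\<Sum>k\<in>UNIV. kl_real (h $ x $ k) (q $ x $ k)))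
      \<le> (\<Sum>x\<in>UNIV. D x * (\<Sum>k\<in>UNIV. kl_real (u $ x $ k) (q $ x $ k)))"
    using min unfolding u_def[symmetric]
    by (simp add: Bpol_eq_ereal_kl_real[OF h hq] Bpol_eq_ereal_kl_real[OF u_nonneg uq])
  moreover have "(\<Sum>x\<in>UNIV. D x * (\<Sum>k\<in>UNIV. kl_real (u $ x $ k) (q $ x $ k) - kl_real (h $ x $ k) (q $ x $ k)))
      \<le> (\<Sum>x\<in>UNIV. D x * (\<Sum>k\<in>UNIV. t * ((p $ x $ k - h $ x $ k) * ln (u $ x $ k / q $ x $ k))))"
    unfolding u using p h t pq hq less_imp_le[OF D]
    by (intro sum_mono mult_left_mono kl_real_segment_le) auto
  moreover have "\<dots> = t * ?S"
    by (simp add: u sum_distrib_left mult.left_commute)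
  ultimately have "0 \<le> t * ?S"
    by (simp add: sum_subtractf right_diff_distrib)
  then show ?thesis
    using t by (simp add: zero_le_mult_iff)
qed

lemma Bpol_projection_variational:
  fixes p h q :: "real^'y::finite^'x::finite"
  assumes D: "\<And>x. 0 < D x"
    and p: "\<And>x k. 0 \<le> p $ x $ k" and h: "\<And>x k. 0 \<le> h $ x $ k"
    and pq: "\<And>x k. 0 < p $ x $ k \<Longrightarrow> 0 < q $ x $ k"
    and hq: "\<And>x k. 0 < h $ x $ k \<Longrightarrow> 0 < q $ x $ k"
    and min: "\<And>t. 0 < t \<Longrightarrow> t < 1 \<Longrightarrow> Bpol D h q \<le> Bpol D ((1 - t) *\<^sub>R h + t *\<^sub>R p) q"
  shows "\<And>x k. 0 < p $ x $ k \<Longrightarrow> 0 < h $ x $ k"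
    and "0 \<le> (\<Sum>x\<in>UNIV. D x * (\<Sum>k\<in>UNIV. (p $ x $ k - h $ x $ k) * ln (h $ x $ k / q $ x $ k)))"
proof -
  define u where "u x k t = (1 - t) * h $ x $ k + t * p $ x $ k" for x k and t :: real
  \<comment> \<open>On the segment, the directional derivative splits into a part continuous at \<open>t = 0\<close>
      and a multiple of \<open>ln t\<close> that collects the mass of \<open>p\<close> outside the support of \<open>h\<close>.\<close>
  define A where "A t = (\<Sum>x\<in>UNIV. D x * (\<Sum>k\<in>UNIV.
      if 0 < h $ x $ k then (p $ x $ k - h $ x $ k) * ln (u x k t / q $ x $ k)
      else p $ x $ k * ln (p $ x $ k / q $ x $ k)))" for t
  define M where "M = (\<Sum>x\<in>UNIV. D x * (\<Sum>k\<in>UNIV. if h $ x $ k = 0 then p $ x $ k else 0))"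
  have split: "(p $ x $ k - h $ x $ k) * ln (u x k t / q $ x $ k)
      = (if 0 < h $ x $ k then (p $ x $ k - h $ x $ k) * ln (u x k t / q $ x $ k)
         else p $ x $ k * ln (p $ x $ k / q $ x $ k))
        + (if h $ x $ k = 0 then p $ x $ k else 0) * ln t" if "0 < t" for x k t
  proof (cases "h $ x $ k = 0 \<and> 0 < p $ x $ k")
    case True
    then have "ln (t * p $ x $ k / q $ x $ k) = ln t + ln (p $ x $ k / q $ x $ k)"
      using that pq[of x k] by (simp add: ln_mult ln_div)
    then show ?thesis
      using True by (simp add: u_def algebra_simps)
  qed (use h[of x k] p[of x k] in \<open>auto simp: order.order_iff_strict\<close>)
  have "\<forall>\<^sub>F t in at_right 0. 0 \<le> A t + M * ln t"
    using eventually_at_right_real[OF zero_less_one]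
  proof eventually_elim
    case (elim t)
    then have "0 \<le> (\<Sum>x\<in>UNIV. D x * (\<Sum>k\<in>UNIV. (p $ x $ k - h $ x $ k) * ln (u x k t / q $ x $ k)))"
      unfolding u_def using assms by (intro Bpol_segment_first_order) auto
    also have "\<dots> = A t + M * ln t"
      using elim by (simp add: split A_def M_def sum.distrib sum_distrib_right distrib_left mult.assoc)
    finally show ?case .
  qed
  moreover have "(A \<longlongrightarrow> A 0) (at_right 0)"
  proof -
    have "((\<lambda>t. ln (u x k t / q $ x $ k)) \<longlongrightarrow> ln (u x k 0 / q $ x $ k)) (at_right 0)"
      if "0 < h $ x $ k" for x k
      unfolding u_def using that hq[OF that] by (intro tendsto_intros) auto
    then show ?thesis
      unfolding A_def by (intro tendsto_sum tendsto_mult_left) (auto intro: tendsto_mult_left)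
  qed
  moreover have "0 \<le> M"
    unfolding M_def using p less_imp_le[OF D] by (intro sum_nonneg mult_nonneg_nonneg) auto
  ultimately have "M = 0" "0 \<le> A 0"
    using log_perturbation_nonneg by blast+
  have M_terms: "(if h $ x $ k = 0 then p $ x $ k else 0) = 0" for x k
  proof -
    have inner: "0 \<le> (\<Sum>k\<in>UNIV. if h $ x $ k = 0 then p $ x $ k else 0)" for x
      using p by (simp add: sum_nonneg)
    then have "D x * (\<Sum>k\<in>UNIV. if h $ x $ k = 0 then p $ x $ k else 0) = 0"
      using \<open>M = 0\<close> less_imp_le[OF D] unfolding M_def by (simp add: sum_nonneg_eq_0_iff)
    then show ?thesis
      using D[of x] inner p by (simp add: sum_nonneg_eq_0_iff)
  qed
  show hp: "0 < h $ x $ k" if "0 < p $ x $ k" for x k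
    using M_terms[of x k] h[of x k] that by (auto simp: order.order_iff_strict split: if_splits)
  have "A 0 = (\<Sum>x\<in>UNIV. D x * (\<Sum>k\<in>UNIV. (p $ x $ k - h $ x $ k) * ln (h $ x $ k / q $ x $ k)))"
  proof -
    have "(if 0 < h $ x $ k then (p $ x $ k - h $ x $ k) * ln (u x k 0 / q $ x $ k)
           else p $ x $ k * ln (p $ x $ k / q $ x $ k))
        = (p $ x $ k - h $ x $ k) * ln (h $ x $ k / q $ x $ k)" for x k
      using hp[of x k] p[of x k] h[of x k] by (auto simp: u_def order.order_iff_strict)
    then show ?thesis
      by (simp add: A_def)
  qed
  then show "0 \<le> (\<Sum>x\<in>UNIV. D x * (\<Sum>k\<in>UNIV. (p $ x $ k - h $ x $ k) * ln (h $ x $ k / q $ x $ k)))"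
    using \<open>0 \<le> A 0\<close> by simp
qed

lemma Bpol_pythagoras:
  fixes p h q :: "real^'y::finite^'x::finite"
  assumes D: "\<And>x. 0 < D x"
    and p: "\<And>x k. 0 \<le> p $ x $ k" and h: "\<And>x k. 0 \<le> h $ x $ k" and q: "\<And>x k. 0 \<le> q $ x $ k"
    and min: "\<And>t. 0 < t \<Longrightarrow> t \<le> 1 \<Longrightarrow> Bpol D h q \<le> Bpol D ((1 - t) *\<^sub>R h + t *\<^sub>R p) q"
  shows "Bpol D p h + Bpol D h q \<le> Bpol D p q"
proof (cases "Bpol D p q = \<infinity>")
  case False
  have pq: "0 < q $ x $ k" if "0 < p $ x $ k" for x k
    using Bpol_finite_imp_support[OF D p q False that] .
  have h_finite: "Bpol D h q \<noteq> \<infinity>"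
    using min[of 1] False by auto
  have hq: "0 < q $ x $ k" if "0 < h $ x $ k" for x k
    using Bpol_finite_imp_support[OF D h q h_finite that] .
  have segment: "Bpol D h q \<le> Bpol D ((1 - t) *\<^sub>R h + t *\<^sub>R p) q" if "0 < t" "t < 1" for t
    using min that by simp
  note variational = Bpol_projection_variational[where D = D and p = p and h = h and q = q]
  have hp: "0 < h $ x $ k" if "0 < p $ x $ k" for x k
    by (rule variational(1)) (auto intro: D p h pq hq segment that)
  have first_order:
    "0 \<le> (\<Sum>x\<in>UNIV. D x * (\<Sum>k\<in>UNIV. (p $ x $ k - h $ x $ k) * ln (h $ x $ k / q $ x $ k)))"
    by (rule variational(2)) (auto intro: D p h pq hq segment)
  have three_point: "kl_real (p $ x $ k) (q $ x $ k) = kl_real (p $ x $ k) (h $ x $ k)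
      + kl_real (h $ x $ k) (q $ x $ k) + (p $ x $ k - h $ x $ k) * ln (h $ x $ k / q $ x $ k)" for x k
  proof (cases "0 < h $ x $ k")
    case True
    then show ?thesis
      using p hq by (intro kl_real_three_point) auto
  next
    case False
    then have "h $ x $ k = 0" "p $ x $ k = 0"
      using h[of x k] p[of x k] hp[of x k] by linarith+
    then show ?thesis
      by (simp add: kl_real_def)
  qed
  have "Bpol D p q = Bpol D p h + Bpol D h q
      + ereal (\<Sum>x\<in>UNIV. D x * (\<Sum>k\<in>UNIV. (p $ x $ k - h $ x $ k) * ln (h $ x $ k / q $ x $ k)))"
    by (simp add: Bpol_eq_ereal_kl_real[OF p pq] Bpol_eq_ereal_kl_real[OF p hp]
        Bpol_eq_ereal_kl_real[OF h hq] three_point sum.distrib distrib_left)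
  then show ?thesis
    using first_order by (simp add: add_increasing2)
qed simp

lemma Bpol_pythagoras_convex:
  fixes p h q :: "real^'y::finite^'x::finite"
  assumes D: "\<And>x. 0 < D x" and "convex K" and "\<And>\<pi> x k. \<pi> \<in> K \<Longrightarrow> 0 \<le> \<pi> $ x $ k"
    and q: "\<And>x k. 0 \<le> q $ x $ k" and "p \<in> K" "h \<in> K"
    and min: "\<And>\<pi>. \<pi> \<in> K \<Longrightarrow> Bpol D h q \<le> Bpol D \<pi> q"
  shows "Bpol D p h + Bpol D h q \<le> Bpol D p q"
proof (rule Bpol_pythagoras[OF D _ _ q])
  show "Bpol D h q \<le> Bpol D ((1 - t) *\<^sub>R h + t *\<^sub>R p) q" if "0 < t" "t \<le> 1" for t
    using that assms by (intro min convexD) auto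
qed (use assms in auto)

section \<open>Projection onto coherent policies\<close>

lemma convex_C_coh_dag: "convex (C_coh_dag \<Phi>)"
  unfolding convex_def C_coh_dag_def by simp

lemma convex_Pi_all: "convex Pi_all"
  unfolding convex_def Pi_all_def prob_vec_def
  by (simp add: sum.distrib flip: sum_distrib_left)

lemma convex_C_coh: "convex (C_coh \<Phi>)"
  unfolding C_coh_def by (intro convex_Int convex_C_coh_dag convex_Pi_all)

lemma sum_involution:
  fixes f :: "'x::finite \<Rightarrow> 'a::comm_monoid_add"
  assumes "\<And>x. \<Phi> (\<Phi> x) = x"
  shows "(\<Sum>x\<in>UNIV. f (\<Phi> x)) = (\<Sum>x\<in>UNIV. f x)"
  by (rule sum.reindex_bij_witness[where i = \<Phi> and j = \<Phi>]) (use assms in auto)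

definition pair_weight :: "('x \<Rightarrow> real) \<Rightarrow> ('x \<Rightarrow> 'x) \<Rightarrow> 'x \<Rightarrow> real" where
  "pair_weight D \<Phi> x = D x / (D x + D (\<Phi> x))"

lemma pair_weight_bounds:
  assumes "\<And>x. 0 < D x"
  shows "0 < pair_weight D \<Phi> x" "pair_weight D \<Phi> x < 1"
  using assms[of x] assms[of "\<Phi> x"] by (simp_all add: pair_weight_def)

lemma pair_weight_involution:
  assumes "\<And>x. 0 < D x" "\<And>x. \<Phi> (\<Phi> x) = x"
  shows "pair_weight D \<Phi> (\<Phi> x) = 1 - pair_weight D \<Phi> x"
  using assms[of x] assms(1)[of "\<Phi> x"] by (simp add: pair_weight_def field_simps)

definition geo_policy :: "('x \<Rightarrow> real) \<Rightarrow> ('x \<Rightarrow> 'x) \<Rightarrow> real^'y::finite^'x::finite \<Rightarrow> real^'y^'x" where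
  "geo_policy D \<Phi> \<pi> = (\<chi> x. geo_mix (pair_weight D \<Phi> x) (\<pi> $ x) (\<pi> $ \<Phi> x))"

lemma geo_policy_coherent:
  assumes "\<And>x. 0 < D x" "\<And>x. \<Phi> (\<Phi> x) = x"
  shows "geo_policy D \<Phi> \<pi> \<in> C_coh_dag \<Phi>"
  using assms by (simp add: C_coh_dag_def geo_policy_def geo_mix_nonneg pair_weight_involution geo_mix_swap)

lemma Bpol_coherent_decomposition:
  fixes \<pi>0 \<pi> :: "real^'y::finite^'x::finite"
  assumes D: "\<And>x. 0 < D x" and \<Phi>: "\<And>x. \<Phi> (\<Phi> x) = x"
    and \<pi>0: "\<pi>0 \<in> Pi_all" and \<pi>: "\<pi> \<in> C_coh_dag \<Phi>"
  shows "Bpol D \<pi> \<pi>0 = Bpol D \<pi> (geo_policy D \<Phi> \<pi>0)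
    + ereal (\<Sum>x\<in>UNIV. D x * (1 - (\<Sum>k\<in>UNIV. geo_policy D \<Phi> \<pi>0 $ x $ k)))"
proof -
  define G where "G = geo_policy D \<Phi> \<pi>0"
  define gap where "gap x = 1 - (\<Sum>k\<in>UNIV. G $ x $ k)" for x
  define f where "f x = ereal (D x) * KL (\<pi> $ x) (\<pi>0 $ x)" for x
  define g where "g x = ereal (D x) * (KL (\<pi> $ x) (G $ x) + ereal (gap x))" for x
  have \<pi>_nonneg: "0 \<le> \<pi> $ x $ k" and \<pi>_sym: "\<pi> $ \<Phi> x = \<pi> $ x" for x k
    using \<pi> by (auto simp: C_coh_dag_def)
  have G_sym: "G $ \<Phi> x = G $ x" for x
    using geo_policy_coherent[of D \<Phi> \<pi>0, OF D \<Phi>] by (simp add: G_def C_coh_dag_def)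
  have rows: "prob_vec (\<pi>0 $ x)" for x
    using \<pi>0 by (simp add: Pi_all_def)
  have "f x + f (\<Phi> x) = g x + g (\<Phi> x)" for x
  proof -
    define l where "l = pair_weight D \<Phi> x"
    define c where "c = D x + D (\<Phi> x)"
    have "0 < c" "0 < l" "l < 1"
      using D[of x] D[of "\<Phi> x"] pair_weight_bounds[of D, OF D] by (auto simp: c_def l_def)
    have "D x = c * l" "D (\<Phi> x) = c * (1 - l)"
      using \<open>0 < c\<close> by (auto simp: c_def l_def pair_weight_def field_simps)
    then have "f x + f (\<Phi> x) = ereal c * (ereal l * KL (\<pi> $ x) (\<pi>0 $ x) + ereal (1 - l) * KL (\<pi> $ x) (\<pi>0 $ \<Phi> x))"
      using \<pi>_nonneg rows \<open>0 < l\<close> \<open>l < 1\<close>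
      by (simp add: f_def \<pi>_sym ereal_right_distrib KL_nonneg prob_vec_def mult.assoc[symmetric])
    also have "\<dots> = ereal c * (KL (\<pi> $ x) (G $ x) + ereal (gap x))"
      using \<pi>_nonneg rows \<open>0 < l\<close> \<open>l < 1\<close>
      by (simp add: KL_geometric_mean G_def gap_def geo_policy_def l_def)
    also have "\<dots> = g x + g (\<Phi> x)"
      using \<pi>_nonneg D[of x] D[of "\<Phi> x"]
      by (simp add: g_def c_def \<pi>_sym G_sym gap_def ereal_left_distrib KL_nonneg flip: plus_ereal.simps)
    finally show ?thesis .
  qed
  \<comment> \<open>Summing over pairs counts every condition twice, hence the doubled sums.\<close>
  moreover have "sum h UNIV + sum h UNIV = (\<Sum>x\<in>UNIV. h x + h (\<Phi> x))" for h :: "'x \<Rightarrow> ereal"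
    using sum_involution[of \<Phi> h] \<Phi> by (simp add: sum.distrib)
  ultimately have "sum f UNIV + sum f UNIV = sum g UNIV + sum g UNIV"
    by simp
  then have "sum f UNIV = sum g UNIV"
    by (cases "sum f UNIV"; cases "sum g UNIV") auto
  moreover have "sum g UNIV = Bpol D \<pi> G + ereal (\<Sum>x\<in>UNIV. D x * gap x)"
    using \<pi>_nonneg rows
    by (simp add: g_def Bpol_def ereal_distrib_left KL_nonneg prob_vec_def sum.distrib)
  ultimately show ?thesis
    by (simp add: f_def Bpol_def G_def gap_def)
qed

lemma coherent_minimizer_eq_geo_policy:
  fixes \<pi>0 \<pi>bar :: "real^'y::finite^'x::finite"
  assumes D: "\<And>x. 0 < D x" and \<Phi>: "\<And>x. \<Phi> (\<Phi> x) = x" and \<pi>0: "\<pi>0 \<in> Pi_all"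
    and \<pi>bar: "\<pi>bar \<in> C_coh_dag \<Phi>"
    and min: "\<And>\<pi>. \<pi> \<in> C_coh_dag \<Phi> \<Longrightarrow> Bpol D \<pi>bar \<pi>0 \<le> Bpol D \<pi> \<pi>0"
  shows "\<pi>bar = geo_policy D \<Phi> \<pi>0"
proof -
  define G where "G = geo_policy D \<Phi> \<pi>0"
  define c where "c = (\<Sum>x\<in>UNIV. D x * (1 - (\<Sum>k\<in>UNIV. G $ x $ k)))"
  have G: "G \<in> C_coh_dag \<Phi>"
    unfolding G_def using D \<Phi> by (rule geo_policy_coherent)
  have G_nonneg: "0 \<le> G $ x $ k" and \<pi>bar_nonneg: "0 \<le> \<pi>bar $ x $ k" for x k
    using G \<pi>bar by (auto simp: C_coh_dag_def)
  have "Bpol D \<pi>bar G + ereal c = Bpol D \<pi>bar \<pi>0"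
    using Bpol_coherent_decomposition[of D \<Phi> \<pi>0 \<pi>bar, OF D \<Phi> \<pi>0 \<pi>bar] by (simp add: G_def c_def)
  also have "\<dots> \<le> Bpol D G \<pi>0"
    using min[OF G] .
  also have "\<dots> = ereal c"
    using Bpol_coherent_decomposition[of D \<Phi> \<pi>0 G, OF D \<Phi> \<pi>0 G] Bpol_self[of G D, OF G_nonneg]
    by (simp add: G_def c_def)
  finally have "Bpol D \<pi>bar G \<le> 0"
    by (cases "Bpol D \<pi>bar G") auto
  moreover have "0 \<le> Bpol D \<pi>bar G"
    by (intro Bpol_nonneg) (simp_all add: less_imp_le[OF D] \<pi>bar_nonneg G_nonneg)
  ultimately have "Bpol D \<pi>bar G = 0"
    by simp
  then show ?thesis
    unfolding G_def[symmetric] by (rule Bpol_eq_0_imp_eq[rotated 3]) (simp_all add: D \<pi>bar_nonneg G_nonneg)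
qed

lemma weighted_hell2_le_geo_policy_gap:
  fixes \<pi>0 :: "real^'y::finite^'x::finite"
  assumes D: "\<And>x. 0 < D x" and \<pi>0: "\<pi>0 \<in> Pi_all"
  shows "(\<Sum>x\<in>UNIV. D x * (2 * min (pair_weight D \<Phi> x) (1 - pair_weight D \<Phi> x)
            * hell2 (\<pi>0 $ x) (\<pi>0 $ \<Phi> x)))
    \<le> (\<Sum>x\<in>UNIV. D x * (1 - (\<Sum>k\<in>UNIV. geo_policy D \<Phi> \<pi>0 $ x $ k)))"
  using \<pi>0 pair_weight_bounds[of D, OF D] less_imp_le[OF D]
  by (intro sum_mono mult_left_mono) (simp_all add: geo_policy_def Pi_all_def hell2_le_geo_mix_gap)

theorem corollary4:
  fixes \<Phi> :: "'x::finite \<Rightarrow> 'x"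
    and D :: "'x \<Rightarrow> real"
    and PiF :: "(real^'y::finite^'x) set"
    and \<pi>0 \<pi>star \<pi>bar \<pi>hat :: "real^'y^'x"
  assumes D_pos: "\<forall>x. D x > 0"
    and D_sum: "(\<Sum>x\<in>UNIV. D x) = 1"
    and inv: "\<forall>x. \<Phi> (\<Phi> x) = x"
    and Pi_sub: "PiF \<subseteq> Pi_all"
    and Pi_closed: "closed PiF"
    and Pi_convex: "convex PiF"
    and pi0: "\<pi>0 \<in> Pi_all"
    and pistar: "\<pi>star \<in> C_coh \<Phi> \<inter> PiF"
    and pibar: "\<pi>bar \<in> C_coh_dag \<Phi>"
    and pibar_min: "\<forall>\<pi>\<in>C_coh_dag \<Phi>. Bpol D \<pi>bar \<pi>0 \<le> Bpol D \<pi> \<pi>0"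
    and pihat: "\<pi>hat \<in> C_coh \<Phi> \<inter> PiF"
    and pihat_min: "\<forall>\<pi>\<in>C_coh \<Phi> \<inter> PiF. Bpol D \<pi>hat \<pi>bar \<le> Bpol D \<pi> \<pi>bar"
  shows "Bpol D \<pi>star \<pi>0 \<ge>
           ereal (\<Sum>x\<in>UNIV. D x * (2 * min (D x / (D x + D (\<Phi> x))) (1 - D x / (D x + D (\<Phi> x)))
                                  * hell2 (\<pi>0 $ x) (\<pi>0 $ (\<Phi> x))))
           + Bpol D \<pi>star \<pi>hat"
proof -
  \<comment> \<open>Closedness of \<open>PiF\<close> and \<open>D_sum\<close> only matter for the existence of the minimizers,
      which are given here.\<close>
  have D: "\<And>x. 0 < D x" and \<Phi>: "\<And>x. \<Phi> (\<Phi> x) = x"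
    using D_pos inv by auto
  define G where "G = geo_policy D \<Phi> \<pi>0"
  have G_nonneg: "0 \<le> G $ x $ k" for x k
    by (simp add: G_def geo_policy_def geo_mix_nonneg)
  have K_nonneg: "0 \<le> \<pi> $ x $ k" if "\<pi> \<in> C_coh \<Phi> \<inter> PiF" for \<pi> x k
    using that by (simp add: C_coh_def C_coh_dag_def)
  have "\<pi>bar = G"
    unfolding G_def using D \<Phi> pi0 pibar pibar_min by (intro coherent_minimizer_eq_geo_policy) auto
  then have "Bpol D \<pi>star \<pi>hat + Bpol D \<pi>hat G \<le> Bpol D \<pi>star G"
    using Pi_convex pistar pihat pihat_min G_nonneg K_nonneg
    by (intro Bpol_pythagoras_convex[OF D, of "C_coh \<Phi> \<inter> PiF"] convex_Int convex_C_coh) auto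
  moreover have "0 \<le> Bpol D \<pi>hat G"
    using pihat by (intro Bpol_nonneg) (simp_all add: less_imp_le[OF D] G_nonneg K_nonneg)
  ultimately have "Bpol D \<pi>star \<pi>hat \<le> Bpol D \<pi>star G"
    by (metis add_increasing2 order_refl order_trans)
  moreover have "Bpol D \<pi>star \<pi>0 = Bpol D \<pi>star G + ereal (\<Sum>x\<in>UNIV. D x * (1 - (\<Sum>k\<in>UNIV. G $ x $ k)))"
    unfolding G_def using D \<Phi> pi0 pistar by (intro Bpol_coherent_decomposition) (auto simp: C_coh_def)
  moreover have "(\<Sum>x\<in>UNIV. D x * (2 * min (D x / (D x + D (\<Phi> x))) (1 - D x / (D x + D (\<Phi> x)))
                                  * hell2 (\<pi>0 $ x) (\<pi>0 $ (\<Phi> x))))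
      \<le> (\<Sum>x\<in>UNIV. D x * (1 - (\<Sum>k\<in>UNIV. G $ x $ k)))"
    using weighted_hell2_le_geo_policy_gap[of D \<pi>0 \<Phi>] D pi0
    by (simp add: G_def pair_weight_def)
  ultimately show ?thesis
    by (simp add: add.commute add_mono)
qed

end
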